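(* Every simple rule defined on $\mathcal{E}_{\mathcal{SP}}$ satisfies not obvious manipulability (NOM).
   Context: Let $N=\{1,\dots,n\}$ be a finite set of agents. A preference $R_i$ is a continuous complete preorder on $\mathbb{R}_+\cup\{\infty\}$, with strict part $P_i$ and indifference $I_i$. Its peak $p(R_i)$ is the set of its maximal elements; when a singleton, we identify it with its element. $R_i$ is single-peaked if $p(R_i)$ is a singleton and for all $x,x'\in\mathbb{R}_+$, $xP_ix'$ whenever $x'<x\le p(R_i)$ or $p(R_i)\le x<x'$; $\mathcal{SP}$ denotes the set of these. An economy is $(R,\Omega)$ with $R\in\mathcal{SP}^n$, $\Omega>0$; $\mathcal{E}_{\mathcal{SP}}$ is the set of economies. A rule is a map $\varphi:\mathcal{E}_{\mathcal{SP}}\to\mathbb{R}^n_+$ with $\sum_j\varphi_j(R,\Omega)=\Omega$. Own-peak-onliness: $p(R_i')=p(R_i)$ implies $\varphi_i(R,\Omega)=\varphi_i(R_i',R_{-i},\Omega)$. Option set: $O^\varphi(R_i,\Omega)=\{\varphi_i(R_i,R_{-i},\Omega):R_{-i}\in\mathcal{SP}^{n-1}\}$. $R_i'$ is a manipulation of $\varphi$ at $(R_i,\Omega)$ if $\varphi_i(R_i',R_{-i},\Omega)P_i\varphi_i(R_i,R_{-i},\Omega)$ for some $R_{-i}$; an obvious manipulation if moreover for each $x'\in O^\varphi(R_i',\Omega)$ there is $x\in O^\varphi(R_i,\Omega)$ with $x'P_ix$. $\varphi$ is NOM if it admits no obvious manipulation. Simple rules: $z(R,\Omega)=\sum_jp(R_j)-\Omega$.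 Agent $i$ is simple if either $z(R,\Omega)\ge0$ and $p(R_i)<\Omega/n$, or $z(R,\Omega)\le0$ and $p(R_i)>\Omega/n$; $N^+(R,\Omega)$ is the set of simple agents, $N^-(R,\Omega)=N\setminus N^+(R,\Omega)$, and $E(R,\Omega)=\left|\Omega-\left(\sum_{j\in N^+}p(R_j)+|N^-|\frac{\Omega}{n}\right)\right|$. An own-peak-only rule $\varphi$ is simple if for every economy and every $i$: $\varphi_i=p(R_i)$ for $i\in N^+$; $\varphi_i=\frac{\Omega}{n}+\nu_i$ for $i\in N^-$ when $z\ge0$; $\varphi_i=\frac{\Omega}{n}-\nu_i$ for $i\in N^-$ when $z\le0$; with $0\le\nu_i\le|p(R_i)-\frac{\Omega}{n}|$ and $\sum_{j\in N^-}\nu_j=E(R,\Omega)$. *)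

theory Defs
  imports "HOL-Analysis.Analysis"
begin

text \<open>A preference is a binary relation \<open>R x y\<close> ("x is at least as good as y") on this space.\<close>

type_synonym pref = "ereal \<Rightarrow> ereal \<Rightarrow> bool"

definition cdom :: "ereal set" where
  "cdom = {x. 0 \<le> x}"

definition strict :: "pref \<Rightarrow> ereal \<Rightarrow> ereal \<Rightarrow> bool" where
  "strict R x y \<longleftrightarrow> R x y \<and> \<not> R y x"

definition cont_complete_preorder :: "pref \<Rightarrow> bool" where
  "cont_complete_preorder R \<longleftrightarrow>
     (\<forall>x y. R x y \<longrightarrow> x \<in> cdom \<and> y \<in> cdom) \<and>
     (\<forall>x\<in>cdom. \<forall>y\<in>cdom. R x y \<or> R y x) \<and>
     (\<forall>x\<in>cdom. \<forall>y\<in>cdom. \<forall>w\<in>cdom. R x y \<longrightarrow> R y w \<longrightarrow> R x w) \<and>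
     (\<forall>y\<in>cdom. closed {x. R x y} \<and> closed {x. R y x})"

definition peak_set :: "pref \<Rightarrow> ereal set" where
  "peak_set R = {x \<in> cdom. \<forall>y\<in>cdom. R x y}"

definition peak :: "pref \<Rightarrow> ereal" where
  "peak R = (THE p. peak_set R = {p})"

definition SP :: "pref set" where
  "SP = {R. cont_complete_preorder R \<and> (\<exists>p. peak_set R = {p}) \<and>
     (\<forall>x x'. 0 \<le> x' \<and> x \<noteq> \<infinity> \<and> x' < x \<and> x \<le> peak R \<longrightarrow> strict R x x') \<and>
     (\<forall>x x'. 0 \<le> x \<and> x' \<noteq> \<infinity> \<and> peak R \<le> x \<and> x < x' \<longrightarrow> strict R x x')}"

text \<open>Agents are the elements of a finite type \<open>'n\<close>, so \<open>n = CARD('n)\<close>.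
A rule maps a profile and an endowment \<open>\<Omega>\<close> to an allocation.\<close>

definition economy :: "('n \<Rightarrow> pref) \<Rightarrow> real \<Rightarrow> bool" where
  "economy R \<Omega> \<longleftrightarrow> (\<forall>i. R i \<in> SP) \<and> \<Omega> > 0"

definition is_rule :: "(('n::finite \<Rightarrow> pref) \<Rightarrow> real \<Rightarrow> 'n \<Rightarrow> real) \<Rightarrow> bool" where
  "is_rule \<phi> \<longleftrightarrow> (\<forall>R \<Omega>. economy R \<Omega> \<longrightarrow>
      (\<forall>i. 0 \<le> \<phi> R \<Omega> i) \<and> (\<Sum>j\<in>UNIV. \<phi> R \<Omega> j) = \<Omega>)"

definition own_peak_only :: "(('n \<Rightarrow> pref) \<Rightarrow> real \<Rightarrow> 'n \<Rightarrow> real) \<Rightarrow> bool" where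
  "own_peak_only \<phi> \<longleftrightarrow> (\<forall>R \<Omega> i R'. economy R \<Omega> \<longrightarrow> R' \<in> SP \<longrightarrow> peak R' = peak (R i) \<longrightarrow>
      \<phi> R \<Omega> i = \<phi> (R(i := R')) \<Omega> i)"

definition option_set :: "(('n \<Rightarrow> pref) \<Rightarrow> real \<Rightarrow> 'n \<Rightarrow> real) \<Rightarrow> 'n \<Rightarrow> pref \<Rightarrow> real \<Rightarrow> real set" where
  "option_set \<phi> i Ri \<Omega> = {\<phi> (R(i := Ri)) \<Omega> i | R. \<forall>j. R j \<in> SP}"

definition manipulation :: "(('n \<Rightarrow> pref) \<Rightarrow> real \<Rightarrow> 'n \<Rightarrow> real) \<Rightarrow> 'n \<Rightarrow> pref \<Rightarrow> pref \<Rightarrow> real \<Rightarrow> bool" where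
  "manipulation \<phi> i Ri Ri' \<Omega> \<longleftrightarrow>
     (\<exists>R. (\<forall>j. R j \<in> SP) \<and>
        strict Ri (ereal (\<phi> (R(i := Ri')) \<Omega> i)) (ereal (\<phi> (R(i := Ri)) \<Omega> i)))"

definition obvious_manipulation :: "(('n \<Rightarrow> pref) \<Rightarrow> real \<Rightarrow> 'n \<Rightarrow> real) \<Rightarrow> 'n \<Rightarrow> pref \<Rightarrow> pref \<Rightarrow> real \<Rightarrow> bool" where
  "obvious_manipulation \<phi> i Ri Ri' \<Omega> \<longleftrightarrow> manipulation \<phi> i Ri Ri' \<Omega> \<and>
     (\<forall>x'\<in>option_set \<phi> i Ri' \<Omega>. \<exists>x\<in>option_set \<phi> i Ri \<Omega>. strict Ri (ereal x') (ereal x))"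

definition NOM :: "(('n \<Rightarrow> pref) \<Rightarrow> real \<Rightarrow> 'n \<Rightarrow> real) \<Rightarrow> bool" where
  "NOM \<phi> \<longleftrightarrow> \<not> (\<exists>i Ri Ri' \<Omega>. Ri \<in> SP \<and> Ri' \<in> SP \<and> \<Omega> > 0 \<and> obvious_manipulation \<phi> i Ri Ri' \<Omega>)"

definition zexc :: "('n::finite \<Rightarrow> pref) \<Rightarrow> real \<Rightarrow> ereal" where
  "zexc R \<Omega> = (\<Sum>j\<in>UNIV. peak (R j)) - ereal \<Omega>"

definition eq_share :: "real \<Rightarrow> 'n::finite itself \<Rightarrow> real" where
  "eq_share \<Omega> _ = \<Omega> / real CARD('n)"

definition Nplus :: "('n::finite \<Rightarrow> pref) \<Rightarrow> real \<Rightarrow> 'n set" where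
  "Nplus R \<Omega> = {i. (zexc R \<Omega> \<ge> 0 \<and> peak (R i) < ereal (eq_share \<Omega> TYPE('n))) \<or>
                     (zexc R \<Omega> \<le> 0 \<and> peak (R i) > ereal (eq_share \<Omega> TYPE('n)))}"

definition Nminus :: "('n::finite \<Rightarrow> pref) \<Rightarrow> real \<Rightarrow> 'n set" where
  "Nminus R \<Omega> = UNIV - Nplus R \<Omega>"

definition Eterm :: "('n::finite \<Rightarrow> pref) \<Rightarrow> real \<Rightarrow> ereal" where
  "Eterm R \<Omega> = \<bar>ereal \<Omega> - ((\<Sum>j\<in>Nplus R \<Omega>. peak (R j))
        + ereal (real (card (Nminus R \<Omega>)) * eq_share \<Omega> TYPE('n)))\<bar>"

definition simple_rule :: "(('n::finite \<Rightarrow> pref) \<Rightarrow> real \<Rightarrow> 'n \<Rightarrow> real) \<Rightarrow> bool" where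
  "simple_rule \<phi> \<longleftrightarrow> is_rule \<phi> \<and> own_peak_only \<phi> \<and>
    (\<forall>R \<Omega>. economy R \<Omega> \<longrightarrow>
      (\<exists>\<nu> :: 'n \<Rightarrow> real.
         (\<forall>i\<in>Nplus R \<Omega>. ereal (\<phi> R \<Omega> i) = peak (R i)) \<and>
         (\<forall>i\<in>Nminus R \<Omega>. zexc R \<Omega> \<ge> 0 \<longrightarrow> \<phi> R \<Omega> i = eq_share \<Omega> TYPE('n) + \<nu> i) \<and>
         (\<forall>i\<in>Nminus R \<Omega>. zexc R \<Omega> \<le> 0 \<longrightarrow> \<phi> R \<Omega> i = eq_share \<Omega> TYPE('n) - \<nu> i) \<and>
         (\<forall>i\<in>Nminus R \<Omega>. 0 \<le> \<nu> i \<and> ereal (\<nu> i) \<le> \<bar>peak (R i) - ereal (eq_share \<Omega> TYPE('n))\<bar>) \<and>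
         ereal (\<Sum>j\<in>Nminus R \<Omega>. \<nu> j) = Eterm R \<Omega>))"

end

theory Submission
  imports Defs
begin

text \<open>Let \<open>q = \<Omega>/n\<close> be the equal share. If all other agents report peak \<open>q\<close>, nobody is
simple, so a simple rule gives everybody exactly \<open>q\<close>: whatever agent \<open>i\<close> reports, \<open>q\<close> is in
her option set. On the other hand a simple rule always allocates to \<open>i\<close> an amount between
\<open>q\<close> and her reported peak, which under truthful reporting she weakly prefers to \<open>q\<close> by
single-peakedness. Hence the worst truthful outcome is at least as good as \<open>q\<close>, while the worst
outcome of any misreport is at most as good as \<open>q\<close>, so no misreport is obvious.\<close>

definition dist_pref :: "real \<Rightarrow> pref" where
  "dist_pref q x y \<longleftrightarrow> x \<in> cdom \<and> y \<in> cdom \<and> \<bar>x - ereal q\<bar> \<le> \<bar>y - ereal q\<bar>"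

lemma continuous_on_abs_diff_ereal: "continuous_on UNIV (\<lambda>x::ereal. \<bar>x - ereal q\<bar>)"
proof -
  have abs_max: "\<bar>y\<bar> = max y (- y)" for y :: ereal
    by (cases y) (auto simp: max_def)
  show ?thesis
    unfolding abs_max continuous_on_def
    by (auto intro!: tendsto_max tendsto_add_ereal_general simp: minus_ereal_def)
qed

lemma closed_cdom: "closed cdom"
  by (simp add: cdom_def atLeast_def[symmetric])

lemma cont_complete_preorder_dist_pref: "cont_complete_preorder (dist_pref q)"
proof -
  let ?d = "\<lambda>x::ereal. \<bar>x - ereal q\<bar>"
  have "closed {x. dist_pref q x y} \<and> closed {x. dist_pref q y x}" if "y \<in> cdom" for y
  proof -
    have "{x. dist_pref q x y} = cdom \<inter> {x. ?d x \<le> ?d y}"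
      "{x. dist_pref q y x} = cdom \<inter> {x. ?d y \<le> ?d x}"
      using that by (auto simp: dist_pref_def)
    then show ?thesis
      by (simp add: closed_Int closed_cdom closed_Collect_le continuous_on_abs_diff_ereal)
  qed
  then show ?thesis
    unfolding cont_complete_preorder_def dist_pref_def by auto
qed

lemma peak_set_dist_pref:
  assumes "0 \<le> q"
  shows "peak_set (dist_pref q) = {ereal q}"
proof (intro set_eqI iffI)
  fix x
  assume "x \<in> peak_set (dist_pref q)"
  then have "dist_pref q x (ereal q)"
    using assms by (simp add: peak_set_def cdom_def)
  then show "x \<in> {ereal q}"
    by (cases x) (auto simp: dist_pref_def)
qed (use assms in \<open>auto simp: peak_set_def dist_pref_def cdom_def\<close>)

lemma peak_dist_pref: "0 \<le> q \<Longrightarrow> peak (dist_pref q) = ereal q"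
  by (simp add: peak_def peak_set_dist_pref)

lemma dist_pref_SP:
  assumes "0 \<le> q"
  shows "dist_pref q \<in> SP"
  unfolding SP_def mem_Collect_eq peak_dist_pref[OF assms]
proof (intro conjI allI impI)
  show "cont_complete_preorder (dist_pref q)"
    by (rule cont_complete_preorder_dist_pref)
  show "\<exists>p. peak_set (dist_pref q) = {p}"
    using peak_set_dist_pref[OF assms] by blast
next
  fix x x' :: ereal
  assume "0 \<le> x' \<and> x \<noteq> \<infinity> \<and> x' < x \<and> x \<le> ereal q"
  then show "strict (dist_pref q) x x'"
    by (cases x; cases x') (auto simp: strict_def dist_pref_def cdom_def)
next
  fix x x' :: ereal
  assume "0 \<le> x \<and> x' \<noteq> \<infinity> \<and> ereal q \<le> x \<and> x < x'"
  then show "strict (dist_pref q) x x'"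
    by (cases x; cases x') (auto simp: strict_def dist_pref_def cdom_def)
qed

lemma SP_peak_nonneg:
  assumes "R \<in> SP"
  shows "0 \<le> peak R"
proof -
  obtain p where p: "peak_set R = {p}"
    using assms by (auto simp: SP_def)
  then have "peak R = p"
    by (simp add: peak_def)
  with p show ?thesis
    by (auto simp: peak_set_def cdom_def)
qed

lemma SP_weakly_prefers_between_peak:
  assumes R: "R \<in> SP" and "0 \<le> q"
    and lower: "min (peak R) (ereal q) \<le> ereal x" and upper: "ereal x \<le> max (peak R) (ereal q)"
  shows "R (ereal x) (ereal q)"
proof -
  have ccp: "cont_complete_preorder R"
    and up: "\<And>x x'. 0 \<le> x' \<and> x \<noteq> \<infinity> \<and> x' < x \<and> x \<le> peak R \<Longrightarrow> strict R x x'"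
    and down: "\<And>x x'. 0 \<le> x \<and> x' \<noteq> \<infinity> \<and> peak R \<le> x \<and> x < x' \<Longrightarrow> strict R x x'"
    using R unfolding SP_def by blast+
  consider "x = q" | "q < x" | "x < q"
    by linarith
  then show ?thesis
  proof cases
    case 1
    have "ereal q \<in> cdom"
      using \<open>0 \<le> q\<close> by (simp add: cdom_def)
    with 1 ccp show ?thesis
      unfolding cont_complete_preorder_def by blast
  next
    case 2
    with upper have "ereal x \<le> peak R"
      by (auto simp: le_max_iff_disj)
    with 2 \<open>0 \<le> q\<close> have "strict R (ereal x) (ereal q)"
      by (intro up) simp
    then show ?thesis
      by (simp add: strict_def)
  next
    case 3
    with lower have "peak R \<le> ereal x"
      by (auto simp: min_le_iff_disj)
    with 3 have "strict R (ereal x) (ereal q)"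
      using order_trans[OF SP_peak_nonneg[OF R], of "ereal x"] by (intro down) simp
    then show ?thesis
      by (simp add: strict_def)
  qed
qed

lemma zexc_others_at_eq_share:
  fixes R :: "'n::finite \<Rightarrow> pref"
  assumes "\<And>j. j \<noteq> i \<Longrightarrow> peak (R j) = ereal (eq_share \<Omega> TYPE('n))"
  shows "zexc R \<Omega> = peak (R i) - ereal (eq_share \<Omega> TYPE('n))"
proof -
  let ?q = "eq_share \<Omega> TYPE('n)"
  have "(\<Sum>j\<in>UNIV. peak (R j)) = peak (R i) + (\<Sum>j\<in>UNIV - {i}. peak (R j))"
    by (simp add: sum.remove)
  also have "(\<Sum>j\<in>UNIV - {i}. peak (R j)) = (\<Sum>j\<in>UNIV - {i}. ereal ?q)"
    using assms by (intro sum.cong) auto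
  also have "(\<Sum>j\<in>UNIV - {i}. ereal ?q) = ereal (\<Omega> - ?q)"
    by (simp add: sum_ereal card_Diff_singleton of_nat_diff eq_share_def field_simps)
  finally show ?thesis
    by (cases "peak (R i)") (simp_all add: zexc_def)
qed

lemma Nplus_empty_if_others_at_eq_share:
  fixes R :: "'n::finite \<Rightarrow> pref"
  assumes "\<And>j. j \<noteq> i \<Longrightarrow> peak (R j) = ereal (eq_share \<Omega> TYPE('n))"
  shows "Nplus R \<Omega> = {}"
proof -
  have "j \<notin> Nplus R \<Omega>" for j
  proof (cases "j = i")
    case True
    then show ?thesis
      using zexc_others_at_eq_share[OF assms]
      by (cases "peak (R i)") (auto simp: Nplus_def)
  next
    case False
    then show ?thesis
      using assms by (simp add: Nplus_def)
  qed
  then show ?thesis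
    by blast
qed

lemma Eterm_eq_0_if_Nplus_empty: "Nplus R \<Omega> = {} \<Longrightarrow> Eterm R \<Omega> = 0"
  by (simp add: Eterm_def Nminus_def eq_share_def)

lemma ereal_add_le_of_abs_diff:
  "ereal q \<le> p \<Longrightarrow> ereal v \<le> \<bar>p - ereal q\<bar> \<Longrightarrow> ereal (q + v) \<le> p"
  by (cases p) auto

lemma ereal_le_diff_of_abs_diff:
  "p \<le> ereal q \<Longrightarrow> ereal v \<le> \<bar>p - ereal q\<bar> \<Longrightarrow> p \<le> ereal (q - v)"
  by (cases p) auto

lemma simple_ruleE:
  fixes \<phi> :: "('n::finite \<Rightarrow> pref) \<Rightarrow> real \<Rightarrow> 'n \<Rightarrow> real"
  assumes "simple_rule \<phi>" "economy R \<Omega>"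
  obtains \<nu> :: "'n \<Rightarrow> real" where
    "\<forall>i\<in>Nplus R \<Omega>. ereal (\<phi> R \<Omega> i) = peak (R i)"
    "\<forall>i\<in>Nminus R \<Omega>. zexc R \<Omega> \<ge> 0 \<longrightarrow> \<phi> R \<Omega> i = eq_share \<Omega> TYPE('n) + \<nu> i"
    "\<forall>i\<in>Nminus R \<Omega>. zexc R \<Omega> \<le> 0 \<longrightarrow> \<phi> R \<Omega> i = eq_share \<Omega> TYPE('n) - \<nu> i"
    "\<forall>i\<in>Nminus R \<Omega>. 0 \<le> \<nu> i \<and> ereal (\<nu> i) \<le> \<bar>peak (R i) - ereal (eq_share \<Omega> TYPE('n))\<bar>"
    "ereal (\<Sum>j\<in>Nminus R \<Omega>. \<nu> j) = Eterm R \<Omega>"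
  using assms unfolding simple_rule_def by blast

lemma simple_rule_eq_share_if_Nplus_empty:
  fixes \<phi> :: "('n::finite \<Rightarrow> pref) \<Rightarrow> real \<Rightarrow> 'n \<Rightarrow> real"
  assumes "simple_rule \<phi>" "economy R \<Omega>" "Nplus R \<Omega> = {}"
  shows "\<phi> R \<Omega> j = eq_share \<Omega> TYPE('n)"
proof -
  have all_Nminus: "Nminus R \<Omega> = UNIV"
    using assms(3) by (simp add: Nminus_def)
  obtain \<nu> :: "'n \<Rightarrow> real" where
    excess: "\<forall>i\<in>Nminus R \<Omega>. zexc R \<Omega> \<ge> 0 \<longrightarrow> \<phi> R \<Omega> i = eq_share \<Omega> TYPE('n) + \<nu> i" and
    shortage: "\<forall>i\<in>Nminus R \<Omega>. zexc R \<Omega> \<le> 0 \<longrightarrow> \<phi> R \<Omega> i = eq_share \<Omega> TYPE('n) - \<nu> i" and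
    bounded: "\<forall>i\<in>Nminus R \<Omega>. 0 \<le> \<nu> i \<and> ereal (\<nu> i) \<le> \<bar>peak (R i) - ereal (eq_share \<Omega> TYPE('n))\<bar>" and
    total: "ereal (\<Sum>i\<in>Nminus R \<Omega>. \<nu> i) = Eterm R \<Omega>"
    by (rule simple_ruleE[OF assms(1,2)])
  have "(\<Sum>i\<in>UNIV. \<nu> i) = 0"
    using total by (simp add: all_Nminus Eterm_eq_0_if_Nplus_empty[OF assms(3)])
  moreover have "\<forall>i\<in>UNIV. 0 \<le> \<nu> i"
    using bounded by (simp add: all_Nminus)
  ultimately have "\<nu> j = 0"
    by (simp add: sum_nonneg_eq_0_iff)
  then show ?thesis
    using excess shortage by (cases "zexc R \<Omega> \<ge> 0") (auto simp: all_Nminus)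
qed

lemma simple_rule_between_peak_and_eq_share:
  fixes \<phi> :: "('n::finite \<Rightarrow> pref) \<Rightarrow> real \<Rightarrow> 'n \<Rightarrow> real"
  assumes "simple_rule \<phi>" "economy R \<Omega>"
  shows "min (peak (R i)) (ereal (eq_share \<Omega> TYPE('n))) \<le> ereal (\<phi> R \<Omega> i)"
    and "ereal (\<phi> R \<Omega> i) \<le> max (peak (R i)) (ereal (eq_share \<Omega> TYPE('n)))"
proof -
  let ?q = "eq_share \<Omega> TYPE('n)" and ?p = "peak (R i)" and ?x = "\<phi> R \<Omega> i"
  obtain \<nu> :: "'n \<Rightarrow> real" where
    simple: "\<forall>i\<in>Nplus R \<Omega>. ereal (\<phi> R \<Omega> i) = peak (R i)" and
    excess: "\<forall>i\<in>Nminus R \<Omega>. zexc R \<Omega> \<ge> 0 \<longrightarrow> \<phi> R \<Omega> i = ?q + \<nu> i" and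
    shortage: "\<forall>i\<in>Nminus R \<Omega>. zexc R \<Omega> \<le> 0 \<longrightarrow> \<phi> R \<Omega> i = ?q - \<nu> i" and
    bounded: "\<forall>i\<in>Nminus R \<Omega>. 0 \<le> \<nu> i \<and> ereal (\<nu> i) \<le> \<bar>peak (R i) - ereal ?q\<bar>"
    by (rule simple_ruleE[OF assms])
  have "min ?p (ereal ?q) \<le> ereal ?x \<and> ereal ?x \<le> max ?p (ereal ?q)"
  proof (cases "i \<in> Nplus R \<Omega>")
    case True
    then show ?thesis
      using simple by (simp add: min_le_iff_disj le_max_iff_disj)
  next
    case False
    then have "i \<in> Nminus R \<Omega>"
      by (simp add: Nminus_def)
    with bounded have \<nu>: "0 \<le> \<nu> i" "ereal (\<nu> i) \<le> \<bar>?p - ereal ?q\<bar>"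
      by auto
    show ?thesis
    proof (cases "0 \<le> zexc R \<Omega>")
      case True
      with False have "ereal ?q \<le> ?p"
        by (auto simp: Nplus_def not_less)
      moreover have "?x = ?q + \<nu> i"
        using excess True \<open>i \<in> Nminus R \<Omega>\<close> by simp
      ultimately show ?thesis
        using \<nu> ereal_add_le_of_abs_diff[of ?q ?p "\<nu> i"] by simp
    next
      case excess_negative: False
      with False have "?p \<le> ereal ?q"
        by (auto simp: Nplus_def not_less)
      moreover have "?x = ?q - \<nu> i"
        using shortage excess_negative \<open>i \<in> Nminus R \<Omega>\<close> by simp
      ultimately show ?thesis
        using \<nu> ereal_le_diff_of_abs_diff[of ?p ?q "\<nu> i"] by simp
    qed
  qed
  then show "min ?p (ereal ?q) \<le> ereal ?x" "ereal ?x \<le> max ?p (ereal ?q)"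
    by auto
qed

lemma eq_share_in_option_set:
  fixes \<phi> :: "('n::finite \<Rightarrow> pref) \<Rightarrow> real \<Rightarrow> 'n \<Rightarrow> real"
  assumes "simple_rule \<phi>" "Ri \<in> SP" "0 < \<Omega>"
  shows "eq_share \<Omega> TYPE('n) \<in> option_set \<phi> i Ri \<Omega>"
proof -
  let ?q = "eq_share \<Omega> TYPE('n)"
  let ?R = "\<lambda>_::'n. dist_pref ?q"
  have "0 \<le> ?q"
    using assms(3) by (simp add: eq_share_def)
  then have others_SP: "\<forall>j. ?R j \<in> SP" and others_peak: "\<And>j. peak (?R j) = ereal ?q"
    by (simp_all add: dist_pref_SP peak_dist_pref)
  have "economy (?R(i := Ri)) \<Omega>"
    using others_SP assms(2,3) by (simp add: economy_def)
  moreover have "Nplus (?R(i := Ri)) \<Omega> = {}"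
    by (rule Nplus_empty_if_others_at_eq_share[of i]) (simp add: others_peak)
  ultimately have "\<phi> (?R(i := Ri)) \<Omega> i = ?q"
    by (rule simple_rule_eq_share_if_Nplus_empty[OF assms(1)])
  with others_SP show ?thesis
    unfolding option_set_def by (auto intro!: exI[of _ ?R])
qed

lemma option_set_weakly_preferred_to_eq_share:
  fixes \<phi> :: "('n::finite \<Rightarrow> pref) \<Rightarrow> real \<Rightarrow> 'n \<Rightarrow> real"
  assumes "simple_rule \<phi>" "Ri \<in> SP" "0 < \<Omega>" "x \<in> option_set \<phi> i Ri \<Omega>"
  shows "Ri (ereal x) (ereal (eq_share \<Omega> TYPE('n)))"
proof -
  obtain R where R: "\<forall>j. R j \<in> SP" and x: "x = \<phi> (R(i := Ri)) \<Omega> i"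
    using assms(4) unfolding option_set_def by blast
  have "economy (R(i := Ri)) \<Omega>"
    using R assms(2,3) by (simp add: economy_def)
  note between = simple_rule_between_peak_and_eq_share[OF assms(1) this, of i]
  have "0 \<le> eq_share \<Omega> TYPE('n)"
    using assms(3) by (simp add: eq_share_def)
  from SP_weakly_prefers_between_peak[OF assms(2) this] between show ?thesis
    unfolding x by simp
qed

theorem theorem1:
  fixes \<phi> :: "('n::finite \<Rightarrow> pref) \<Rightarrow> real \<Rightarrow> 'n \<Rightarrow> real"
  assumes "simple_rule \<phi>"
  shows "NOM \<phi>"
  unfolding NOM_def obvious_manipulation_def
proof clarify
  fix i Ri Ri' \<Omega>
  assume "Ri \<in> SP" "Ri' \<in> SP" "0 < \<Omega>"
    and worst_case: "\<forall>x'\<in>option_set \<phi> i Ri' \<Omega>. \<exists>x\<in>option_set \<phi> i Ri \<Omega>. strict Ri (ereal x') (ereal x)"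
  obtain x where "x \<in> option_set \<phi> i Ri \<Omega>" "strict Ri (ereal (eq_share \<Omega> TYPE('n))) (ereal x)"
    using worst_case eq_share_in_option_set[OF assms \<open>Ri' \<in> SP\<close> \<open>0 < \<Omega>\<close>] by blast
  with option_set_weakly_preferred_to_eq_share[OF assms \<open>Ri \<in> SP\<close> \<open>0 < \<Omega>\<close>] show False
    by (simp add: strict_def)
qed

end
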